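(* Let $1\le p<\infty$ and $\rho(t)=e^{-t^2-\epsilon pt}$, and let $\mu$ be the associated measure on $X$. Then there exists $u\in N^{1,p}(X)$ such that the trace $\widetilde u$ exists (indeed $\widetilde u\equiv0$ on $Z$) but the trace $\mathscr Tu$ does not exist.
   Context: Standing setting. $(Z,d_Z,\nu)$ is a compact metric space with $0<\operatorname{diam}Z<1$, and $\nu$ is a doubling Borel measure. Fix $\alpha,\tau>1$ and $z_0\in Z$. Let $A_0=\{z_0\}$ and, for $n\ge1$, let $A_n\subset Z$ be a maximal $\alpha^{-n}$-separated set, chosen so that $A_n\subset A_m$ whenever $m>n\ge0$. Put $V_n=\{(x,n):x\in A_n\}$, $V=\bigcup_nV_n$, root $v_0=(z_0,0)$, $B_v=\mathbb B_Z(x,\alpha^{-n})$ for $v=(x,n)$. Two distinct vertices $(x,n),(y,m)$ are joined by an edge iff $|n-m|\le1$ and $\mathbb B_Z(x,\tau^{1-|n-m|}\alpha^{-n})\cap\mathbb B_Z(y,\tau^{1-|n-m|}\alpha^{-m})\neq\emptyset$. $X$ is this graph as a metric graph with unit-length edges; $|x|$ is the graph distance from $x$ to $v_0$, $d|x|$ is length measure on edges. Let $\epsilon=\log\alpha$, $d(y,z)=\inf_\gamma\int_\gamma e^{-\epsilon|x|}d|x|$, $ds=e^{-\epsilon|x|}d|x|$. Given a Borel $\rho:[0,\infty)\to(0,\infty)$, $\rho\in L^1_{\rm loc}$, $d\mu(x)=\rho(|x|)(\nu(B_{v_1})+\nu(B_{v_2}))\,d|x|$ for $x$ interior to the edge $[v_1,v_2]$.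 The boundary of $(X,d)$ is identified with $Z$. For $\xi\in Z$, $A_n(\xi)=A_n\cap\mathbb B_Z(\xi,\alpha^{-n})$, $V_n(\xi)=\{(x,n):x\in A_n(\xi)\}$; a geodesic ray $[v_0,\xi)=\bigcup_{n\ge0}[v_n(\xi),v_{n+1}(\xi)]$ with $v_n(\xi)\in V_n(\xi)$. $\mathscr Tu$ exists if for $\nu$-a.e. $\xi$ the limit of $u(x)$ as $x\to\xi$ along $[v_0,\xi)$ exists for every geodesic ray and is ray-independent. $\widetilde u$ exists if $\lim_n u_n(\xi)$ exists for $\nu$-a.e. $\xi$, where $u_n(\xi)=\frac1{\#A_n(\xi)}\sum_{z\in A_n(\xi)}u((z,n))$. Upper gradients: Borel $g\ge0$ with $|u(x)-u(y)|\le\int_\gamma g\,ds$ for each nonconstant compact rectifiable curve $\gamma$ with endpoints $x,y$. $N^{1,p}(X)$: $u\in L^p(X,\mu)$ with an upper gradient in $L^p(X,\mu)$, norm $\|u\|_{L^p}+\inf_g\|g\|_{L^p}$. *)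

theory Defs
  imports "HOL-Analysis.Analysis"
begin

definition ballZ :: "'z::metric_space set \<Rightarrow> 'z \<Rightarrow> real \<Rightarrow> 'z set" where
  "ballZ Z x r = ball x r \<inter> Z"

definition separated :: "real \<Rightarrow> 'z::metric_space set \<Rightarrow> bool" where
  "separated r S \<longleftrightarrow> (\<forall>x\<in>S. \<forall>y\<in>S. x \<noteq> y \<longrightarrow> r \<le> dist x y)"

definition max_separated :: "'z::metric_space set \<Rightarrow> real \<Rightarrow> 'z set \<Rightarrow> bool" where
  "max_separated Z r S \<longleftrightarrow> S \<subseteq> Z \<and> separated r S \<and>
     (\<forall>T. S \<subseteq> T \<and> T \<subseteq> Z \<and> separated r T \<longrightarrow> T = S)"

definition doubling_on :: "'z::metric_space set \<Rightarrow> 'z measure \<Rightarrow> bool" where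
  "doubling_on Z \<nu> \<longleftrightarrow> (\<exists>C::real. \<forall>x\<in>Z. \<forall>r>0.
      0 < emeasure \<nu> (ballZ Z x r) \<and> emeasure \<nu> (ballZ Z x r) < \<infinity> \<and>
      emeasure \<nu> (ballZ Z x (2 * r)) \<le> ennreal C * emeasure \<nu> (ballZ Z x r))"

text \<open>A point of the metric graph is represented by its barycentric coordinates:
  a vertex v is the indicator function of v, a point of the edge [a,b] at distance t
  from a is (1-t) vtx a + t vtx b.\<close>

definition vtx :: "'v \<Rightarrow> ('v \<Rightarrow> real)" where
  "vtx v = (\<lambda>w. if w = v then 1 else 0)"

definition edge_pt :: "'v \<Rightarrow> 'v \<Rightarrow> real \<Rightarrow> ('v \<Rightarrow> real)" where
  "edge_pt a b t = (\<lambda>w. (1 - t) * vtx a w + t * vtx b w)"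

definition realization :: "'v set \<Rightarrow> ('v \<Rightarrow> 'v \<Rightarrow> bool) \<Rightarrow> ('v \<Rightarrow> real) set" where
  "realization V E = vtx ` V \<union> {edge_pt a b t | a b t. E a b \<and> 0 < t \<and> t < 1}"

definition supp :: "('v \<Rightarrow> real) \<Rightarrow> 'v set" where
  "supp x = {w. x w \<noteq> 0}"

definition gdist :: "('v \<Rightarrow> 'v \<Rightarrow> bool) \<Rightarrow> 'v \<Rightarrow> 'v \<Rightarrow> nat" where
  "gdist E v w = (LEAST k. \<exists>f. f 0 = v \<and> f k = w \<and> (\<forall>i<k. E (f i) (f (Suc i))))"

text \<open>Distance |x| from the root v0 in the metric graph with unit-length edges.\<close>
definition hgt :: "('v \<Rightarrow> 'v \<Rightarrow> bool) \<Rightarrow> 'v \<Rightarrow> ('v \<Rightarrow> real) \<Rightarrow> real" where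
  "hgt E v0 x = Min {(1 - x a) + real (gdist E v0 a) | a. a \<in> supp x}"

text \<open>Path metric of the metric graph with unit-length edges.\<close>
definition gmetric :: "('v \<Rightarrow> 'v \<Rightarrow> bool) \<Rightarrow> ('v \<Rightarrow> real) \<Rightarrow> ('v \<Rightarrow> real) \<Rightarrow> real" where
  "gmetric E x y =
     (if \<exists>a b. (a = b \<or> E a b) \<and> supp x \<union> supp y \<subseteq> {a, b}
      then (\<Sum>w\<in>supp x \<union> supp y. \<bar>x w - y w\<bar>) / 2
      else Min {(1 - x a) + real (gdist E a b) + (1 - y b) | a b. a \<in> supp x \<and> b \<in> supp y})"

definition mopen :: "'p set \<Rightarrow> ('p \<Rightarrow> 'p \<Rightarrow> real) \<Rightarrow> 'p set \<Rightarrow> bool" where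
  "mopen X dm S \<longleftrightarrow> S \<subseteq> X \<and> (\<forall>x\<in>S. \<exists>r>0. \<forall>y\<in>X. dm x y < r \<longrightarrow> y \<in> S)"

definition mborel :: "'p set \<Rightarrow> ('p \<Rightarrow> 'p \<Rightarrow> real) \<Rightarrow> 'p measure" where
  "mborel X dm = sigma X {S. mopen X dm S}"

definition curve_cont :: "('p \<Rightarrow> 'p \<Rightarrow> real) \<Rightarrow> (real \<Rightarrow> 'p) \<Rightarrow> real \<Rightarrow> real \<Rightarrow> bool" where
  "curve_cont dm \<gamma> a b \<longleftrightarrow> (\<forall>t\<in>{a..b}. \<forall>e>0. \<exists>\<delta>>0. \<forall>s\<in>{a..b}.
      \<bar>s - t\<bar> < \<delta> \<longrightarrow> dm (\<gamma> s) (\<gamma> t) < e)"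

definition curve_length :: "('p \<Rightarrow> 'p \<Rightarrow> real) \<Rightarrow> (real \<Rightarrow> 'p) \<Rightarrow> real \<Rightarrow> real \<Rightarrow> ennreal" where
  "curve_length dm \<gamma> a b =
     (SUP P \<in> {(n, ts). ts 0 = a \<and> ts n = b \<and> (\<forall>i<n. ts i \<le> ts (Suc i))}.
        ennreal (\<Sum>i<fst P. dm (\<gamma> (snd P i)) (\<gamma> (snd P (Suc i)))))"

definition arc_param :: "('p \<Rightarrow> 'p \<Rightarrow> real) \<Rightarrow> (real \<Rightarrow> 'p) \<Rightarrow> real \<Rightarrow> real \<Rightarrow> real \<Rightarrow> 'p" where
  "arc_param dm \<gamma> a b \<sigma> = \<gamma> (SOME t. t \<in> {a..b} \<and> curve_length dm \<gamma> a t = ennreal \<sigma>)"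

definition line_int :: "('p \<Rightarrow> 'p \<Rightarrow> real) \<Rightarrow> (real \<Rightarrow> 'p) \<Rightarrow> real \<Rightarrow> real \<Rightarrow> ('p \<Rightarrow> ennreal) \<Rightarrow> ennreal" where
  "line_int dm \<gamma> a b h =
     (\<integral>\<^sup>+ \<sigma>. h (arc_param dm \<gamma> a b \<sigma>) * indicator {0..enn2real (curve_length dm \<gamma> a b)} \<sigma> \<partial>lborel)"

section \<open>The hyperbolic filling\<close>

definition fV :: "(nat \<Rightarrow> 'z set) \<Rightarrow> ('z \<times> nat) set" where
  "fV A = {(x, n). x \<in> A n}"

definition fE :: "'z::metric_space set \<Rightarrow> (nat \<Rightarrow> 'z set) \<Rightarrow> real \<Rightarrow> real \<Rightarrow> ('z \<times> nat) \<Rightarrow> ('z \<times> nat) \<Rightarrow> bool" where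
  "fE Z A \<alpha> \<tau> v w \<longleftrightarrow> v \<in> fV A \<and> w \<in> fV A \<and> v \<noteq> w \<and>
     (let x = fst v; n = snd v; y = fst w; m = snd w; k = \<bar>real n - real m\<bar> in
        k \<le> 1 \<and>
        ballZ Z x (\<tau> powr (1 - k) * (1 / \<alpha>) ^ n) \<inter> ballZ Z y (\<tau> powr (1 - k) * (1 / \<alpha>) ^ m) \<noteq> {})"

definition fX :: "'z::metric_space set \<Rightarrow> (nat \<Rightarrow> 'z set) \<Rightarrow> real \<Rightarrow> real \<Rightarrow> (('z \<times> nat) \<Rightarrow> real) set" where
  "fX Z A \<alpha> \<tau> = realization (fV A) (fE Z A \<alpha> \<tau>)"

definition fhgt :: "'z::metric_space set \<Rightarrow> (nat \<Rightarrow> 'z set) \<Rightarrow> real \<Rightarrow> real \<Rightarrow> 'z \<Rightarrow> (('z \<times> nat) \<Rightarrow> real) \<Rightarrow> real" where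
  "fhgt Z A \<alpha> \<tau> z0 x = hgt (fE Z A \<alpha> \<tau>) (z0, 0) x"

definition fdX :: "'z::metric_space set \<Rightarrow> (nat \<Rightarrow> 'z set) \<Rightarrow> real \<Rightarrow> real \<Rightarrow> (('z \<times> nat) \<Rightarrow> real) \<Rightarrow> (('z \<times> nat) \<Rightarrow> real) \<Rightarrow> real" where
  "fdX Z A \<alpha> \<tau> = gmetric (fE Z A \<alpha> \<tau>)"

definition Bv :: "'z::metric_space set \<Rightarrow> real \<Rightarrow> ('z \<times> nat) \<Rightarrow> 'z set" where
  "Bv Z \<alpha> v = ballZ Z (fst v) ((1 / \<alpha>) ^ snd v)"

text \<open>Integral of a nonnegative function against
  d mu(x) = rho(|x|) (nu(B_v1) + nu(B_v2)) d|x| on the interior of each edge [v1,v2].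
  The sum is over ordered pairs, hence the factor 1/2.\<close>
definition mu_int :: "'z::metric_space set \<Rightarrow> (nat \<Rightarrow> 'z set) \<Rightarrow> real \<Rightarrow> real \<Rightarrow> 'z \<Rightarrow> 'z measure \<Rightarrow>
    (real \<Rightarrow> real) \<Rightarrow> ((('z \<times> nat) \<Rightarrow> real) \<Rightarrow> ennreal) \<Rightarrow> ennreal" where
  "mu_int Z A \<alpha> \<tau> z0 \<nu> \<rho> f =
     (\<integral>\<^sup>+ e. (\<integral>\<^sup>+ t. f (edge_pt (fst e) (snd e) t)
            * ennreal (\<rho> (fhgt Z A \<alpha> \<tau> z0 (edge_pt (fst e) (snd e) t)))
            * (emeasure \<nu> (Bv Z \<alpha> (fst e)) + emeasure \<nu> (Bv Z \<alpha> (snd e)))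
            * indicator {0<..<1} t \<partial>lborel)
        \<partial>count_space {(a, b). fE Z A \<alpha> \<tau> a b}) / 2"

definition ennpow :: "ennreal \<Rightarrow> real \<Rightarrow> ennreal" where
  "ennpow x p = (if x = \<infinity> then \<infinity> else ennreal (enn2real x powr p))"

text \<open>Upper gradient with respect to ds = exp(-eps |x|) d|x|, eps = ln alpha.\<close>
definition upper_gradient :: "'z::metric_space set \<Rightarrow> (nat \<Rightarrow> 'z set) \<Rightarrow> real \<Rightarrow> real \<Rightarrow> 'z \<Rightarrow>
    ((('z \<times> nat) \<Rightarrow> real) \<Rightarrow> real) \<Rightarrow> ((('z \<times> nat) \<Rightarrow> real) \<Rightarrow> ennreal) \<Rightarrow> bool" where
  "upper_gradient Z A \<alpha> \<tau> z0 u g \<longleftrightarrow>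
     (\<forall>\<gamma> a b. a < b \<and> (\<forall>t\<in>{a..b}. \<gamma> t \<in> fX Z A \<alpha> \<tau>) \<and> curve_cont (fdX Z A \<alpha> \<tau>) \<gamma> a b
        \<and> curve_length (fdX Z A \<alpha> \<tau>) \<gamma> a b < \<infinity> \<and> (\<exists>s\<in>{a..b}. \<exists>t\<in>{a..b}. \<gamma> s \<noteq> \<gamma> t)
      \<longrightarrow> ennreal \<bar>u (\<gamma> a) - u (\<gamma> b)\<bar>
            \<le> line_int (fdX Z A \<alpha> \<tau>) \<gamma> a b
                 (\<lambda>x. g x * ennreal (exp (- ln \<alpha> * fhgt Z A \<alpha> \<tau> z0 x))))"

definition N1p :: "'z::metric_space set \<Rightarrow> (nat \<Rightarrow> 'z set) \<Rightarrow> real \<Rightarrow> real \<Rightarrow> 'z \<Rightarrow> 'z measure \<Rightarrow>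
    (real \<Rightarrow> real) \<Rightarrow> real \<Rightarrow> ((('z \<times> nat) \<Rightarrow> real) \<Rightarrow> real) \<Rightarrow> bool" where
  "N1p Z A \<alpha> \<tau> z0 \<nu> \<rho> p u \<longleftrightarrow>
     u \<in> borel_measurable (mborel (fX Z A \<alpha> \<tau>) (fdX Z A \<alpha> \<tau>)) \<and>
     mu_int Z A \<alpha> \<tau> z0 \<nu> \<rho> (\<lambda>x. ennreal (\<bar>u x\<bar> powr p)) < \<infinity> \<and>
     (\<exists>g. g \<in> borel_measurable (mborel (fX Z A \<alpha> \<tau>) (fdX Z A \<alpha> \<tau>)) \<and>
          upper_gradient Z A \<alpha> \<tau> z0 u g \<and>
          mu_int Z A \<alpha> \<tau> z0 \<nu> \<rho> (\<lambda>x. ennpow (g x) p) < \<infinity>)"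

definition A_xi :: "(nat \<Rightarrow> 'z::metric_space set) \<Rightarrow> real \<Rightarrow> 'z \<Rightarrow> nat \<Rightarrow> 'z set" where
  "A_xi A \<alpha> \<xi> n = {z \<in> A n. dist z \<xi> < (1 / \<alpha>) ^ n}"

definition ray_pt :: "(nat \<Rightarrow> 'z) \<Rightarrow> real \<Rightarrow> (('z \<times> nat) \<Rightarrow> real)" where
  "ray_pt xs r = (let n = nat \<lfloor>r\<rfloor> in edge_pt (xs n, n) (xs (Suc n), Suc n) (r - real n))"

definition trace_T_exists :: "'z measure \<Rightarrow> (nat \<Rightarrow> 'z::metric_space set) \<Rightarrow> real \<Rightarrow>
    ((('z \<times> nat) \<Rightarrow> real) \<Rightarrow> real) \<Rightarrow> bool" where
  "trace_T_exists \<nu> A \<alpha> u \<longleftrightarrow>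
     (AE \<xi> in \<nu>. \<exists>L. \<forall>xs. (\<forall>n. xs n \<in> A_xi A \<alpha> \<xi> n) \<longrightarrow>
        ((\<lambda>r. u (ray_pt xs r)) \<longlongrightarrow> L) at_top)"

definition avg_n :: "(nat \<Rightarrow> 'z::metric_space set) \<Rightarrow> real \<Rightarrow> ((('z \<times> nat) \<Rightarrow> real) \<Rightarrow> real) \<Rightarrow> 'z \<Rightarrow> nat \<Rightarrow> real" where
  "avg_n A \<alpha> u \<xi> n = (\<Sum>z\<in>A_xi A \<alpha> \<xi> n. u (vtx (z, n))) / real (card (A_xi A \<alpha> \<xi> n))"

definition trace_tilde_exists :: "'z measure \<Rightarrow> (nat \<Rightarrow> 'z::metric_space set) \<Rightarrow> real \<Rightarrow>
    ((('z \<times> nat) \<Rightarrow> real) \<Rightarrow> real) \<Rightarrow> bool" where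
  "trace_tilde_exists \<nu> A \<alpha> u \<longleftrightarrow> (AE \<xi> in \<nu>. convergent (\<lambda>n. avg_n A \<alpha> u \<xi> n))"

end

(*
  The witness is the distance to the nearest vertex, u = min (t, 1 - t) on every edge. It vanishes at
  all vertices, so every average u_n(xi) is 0, but it equals 1/2 at every edge midpoint, so it has no
  limit along any geodesic ray. Being 2-Lipschitz for the graph metric, it has the upper gradient
  g = 2 exp(eps |x|) with respect to ds = exp(-eps |x|) d|x|, and rho(t) exp(eps p t) = exp(-t^2).
  The doubling property bounds #A_n geometrically, so the number of edges at level m grows at most
  exponentially in m, and the Gaussian factor makes the integrals of |u|^p and g^p finite.
*)

theory Submission
  imports Defs
begin

lemma lipschitz_measurable_mborel:
  fixes f :: "'p \<Rightarrow> real"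
  assumes lip: "\<And>x y. x \<in> X \<Longrightarrow> y \<in> X \<Longrightarrow> \<bar>f x - f y\<bar> \<le> L * dm x y" and L: "0 < L"
  shows "f \<in> borel_measurable (mborel X dm)"
proof (rule borel_measurableI)
  have gen: "{S. mopen X dm S} \<subseteq> Pow X" by (auto simp: mopen_def)
  have space: "space (mborel X dm) = X" unfolding mborel_def by (rule space_measure_of[OF gen])
  fix S :: "real set" assume S: "open S"
  have "mopen X dm (f -` S \<inter> X)"
    unfolding mopen_def
  proof (intro conjI ballI)
    fix x assume x: "x \<in> f -` S \<inter> X"
    obtain e where e: "e > 0" "ball (f x) e \<subseteq> S" using S x open_contains_ball by blast
    show "\<exists>r>0. \<forall>y\<in>X. dm x y < r \<longrightarrow> y \<in> f -` S \<inter> X"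
    proof (intro exI[of _ "e / L"] conjI ballI impI)
      show "e / L > 0" using e L by simp
      fix y assume y: "y \<in> X" "dm x y < e / L"
      have "\<bar>f x - f y\<bar> \<le> L * dm x y" using lip x y by auto
      also have "\<dots> < e" using y L by (simp add: field_simps)
      finally have "f y \<in> ball (f x) e" by (simp add: dist_real_def)
      thus "y \<in> f -` S \<inter> X" using e y by auto
    qed
  qed auto
  hence "f -` S \<inter> X \<in> sigma_sets X {S. mopen X dm S}" by (auto intro: sigma_sets.Basic)
  thus "f -` S \<inter> space (mborel X dm) \<in> sets (mborel X dm)"
    unfolding space unfolding mborel_def sets_measure_of[OF gen] .
qed

lemma summable_exp_neg_square_mult_power:
  fixes B :: real
  shows "summable (\<lambda>m::nat. exp (- (real m)\<^sup>2) * B ^ m)"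
proof (rule summable_ratio_test[where c = "1/2" and N = "nat \<lceil>\<bar>B\<bar>\<rceil>"])
  fix m :: nat assume m: "nat \<lceil>\<bar>B\<bar>\<rceil> \<le> m"
  have "2 * \<bar>B\<bar> \<le> exp (2 * real m + 1)"
    using m exp_ge_add_one_self[of "2 * real m + 1"] by linarith
  hence "exp (- (2 * real m + 1)) * (2 * \<bar>B\<bar>) \<le> exp (- (2 * real m + 1)) * exp (2 * real m + 1)"
    by (intro mult_left_mono) auto
  hence ratio: "exp (- (2 * real m + 1)) * \<bar>B\<bar> \<le> 1/2"
    by (simp add: exp_add[symmetric])
  have "exp (- (real (Suc m))\<^sup>2) = exp (- (2 * real m + 1)) * exp (- (real m)\<^sup>2)"
    by (simp add: exp_add[symmetric] power2_eq_square algebra_simps)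
  hence "norm (exp (- (real (Suc m))\<^sup>2) * B ^ Suc m)
      = (exp (- (2 * real m + 1)) * \<bar>B\<bar>) * norm (exp (- (real m)\<^sup>2) * B ^ m)"
    by (simp add: abs_mult power_abs)
  also have "\<dots> \<le> 1/2 * norm (exp (- (real m)\<^sup>2) * B ^ m)"
    by (rule mult_right_mono[OF ratio]) simp
  finally show "norm (exp (- (real (Suc m))\<^sup>2) * B ^ Suc m) \<le> 1/2 * norm (exp (- (real m)\<^sup>2) * B ^ m)" .
qed simp

lemma suminf_exp_neg_square_mult_power_finite:
  assumes "0 \<le> c" "0 \<le> B"
  shows "(\<Sum>m. ennreal (c * (exp (- (real m)\<^sup>2) * B ^ m))) < \<infinity>"
proof -
  have "summable (\<lambda>m. c * (exp (- (real m)\<^sup>2) * B ^ m))"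
    by (rule summable_mult) (rule summable_exp_neg_square_mult_power)
  hence "(\<Sum>m. ennreal (c * (exp (- (real m)\<^sup>2) * B ^ m))) \<noteq> top"
    by (rule ennreal_suminf_neq_top) (use assms in simp)
  thus ?thesis by (simp add: less_top)
qed

lemma doubling_iterate:
  assumes "0 \<le> C" and "0 < r"
    and doubling: "\<And>s. 0 < s \<Longrightarrow> emeasure \<nu> (ballZ Z x (2 * s)) \<le> ennreal C * emeasure \<nu> (ballZ Z x s)"
  shows "emeasure \<nu> (ballZ Z x (2 ^ k * r)) \<le> ennreal (C ^ k) * emeasure \<nu> (ballZ Z x r)"
proof (induction k)
  case (Suc k)
  have "emeasure \<nu> (ballZ Z x (2 ^ Suc k * r)) = emeasure \<nu> (ballZ Z x (2 * (2 ^ k * r)))"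
    by (simp add: mult.assoc)
  also have "\<dots> \<le> ennreal C * emeasure \<nu> (ballZ Z x (2 ^ k * r))"
    using doubling assms(2) by simp
  also have "\<dots> \<le> ennreal C * (ennreal (C ^ k) * emeasure \<nu> (ballZ Z x r))"
    by (intro mult_left_mono Suc.IH) auto
  also have "\<dots> = ennreal (C ^ Suc k) * emeasure \<nu> (ballZ Z x r)"
    using assms(1) by (simp add: ennreal_mult mult.assoc)
  finally show ?case .
qed simp

(* Packing: the disjoint balls of radius r/2 around an r-separated set each carry at least 1/c of the mass. *)
lemma card_separated_le:
  fixes F :: "'z::metric_space set"
  assumes "finite F" and sep: "separated r F" and "0 \<le> c"
    and space: "space \<nu> = Z" and balls: "\<And>x s. ballZ Z x s \<in> sets \<nu>"
    and pos: "0 < emeasure \<nu> Z" and fin: "emeasure \<nu> Z < \<infinity>"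
    and share: "\<And>x. x \<in> F \<Longrightarrow> emeasure \<nu> Z \<le> ennreal c * emeasure \<nu> (ballZ Z x (r / 2))"
  shows "real (card F) \<le> c"
proof -
  have disj: "disjoint_family_on (\<lambda>x. ballZ Z x (r / 2)) F"
    unfolding disjoint_family_on_def
  proof (intro ballI impI)
    fix x y assume xy: "x \<in> F" "y \<in> F" "x \<noteq> y"
    show "ballZ Z x (r / 2) \<inter> ballZ Z y (r / 2) = {}"
    proof (rule ccontr)
      assume "ballZ Z x (r / 2) \<inter> ballZ Z y (r / 2) \<noteq> {}"
      then obtain z where "dist x z < r / 2" "dist y z < r / 2" by (auto simp: ballZ_def)
      hence "dist x y < r" using dist_triangle3[of x y z] by (simp add: dist_commute)
      with sep xy show False unfolding separated_def by (meson not_le)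
    qed
  qed
  have "of_nat (card F) * emeasure \<nu> Z = (\<Sum>x\<in>F. emeasure \<nu> Z)" by simp
  also have "\<dots> \<le> (\<Sum>x\<in>F. ennreal c * emeasure \<nu> (ballZ Z x (r / 2)))"
    using share by (intro sum_mono) auto
  also have "\<dots> = ennreal c * emeasure \<nu> (\<Union>x\<in>F. ballZ Z x (r / 2))"
    using balls by (simp add: sum_distrib_left[symmetric] sum_emeasure[OF _ disj \<open>finite F\<close>] image_subset_iff)
  also have "\<dots> \<le> ennreal c * emeasure \<nu> Z"
    by (intro mult_left_mono) (use emeasure_space[of \<nu>] space in auto)
  finally have "emeasure \<nu> Z * ennreal (real (card F)) \<le> emeasure \<nu> Z * ennreal c"
    by (simp add: mult.commute ennreal_of_nat_eq_real_of_nat)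
  hence "ennreal (real (card F)) \<le> ennreal c"
    using pos fin by (subst (asm) ennreal_mult_le_mult_iff) auto
  thus ?thesis using \<open>0 \<le> c\<close> by simp
qed

lemma finite_if_card_subsets_bounded:
  assumes "\<And>F. F \<subseteq> S \<Longrightarrow> finite F \<Longrightarrow> real (card F) \<le> c"
  shows "finite S"
proof (rule ccontr)
  assume "infinite S"
  then obtain F where "F \<subseteq> S" "finite F" "card F = nat \<lceil>c\<rceil> + 1"
    using infinite_arbitrarily_large by blast
  with assms[of F] show False by linarith
qed

lemma curve_length_ge_dist:
  assumes "a < b"
  shows "ennreal (dm (\<gamma> a) (\<gamma> b)) \<le> curve_length dm \<gamma> a b"
  unfolding curve_length_def
proof (rule SUP_upper2[where i = "(1, \<lambda>i. if i = 0 then a else b)"])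
  show "(1, \<lambda>i. if i = 0 then a else b) \<in> {(n, ts). ts 0 = a \<and> ts n = b \<and> (\<forall>i<n. ts i \<le> ts (Suc i))}"
    using assms by auto
qed simp

(* The weight exp(eps |x|) cancels the density of ds, so the line integral of g is L times the curve length. *)
lemma lipschitz_upper_gradient:
  assumes "0 \<le> L"
    and lip: "\<And>x y. x \<in> fX Z A \<alpha> \<tau> \<Longrightarrow> y \<in> fX Z A \<alpha> \<tau> \<Longrightarrow> \<bar>u x - u y\<bar> \<le> L * fdX Z A \<alpha> \<tau> x y"
  shows "upper_gradient Z A \<alpha> \<tau> z0 u (\<lambda>x. ennreal (L * exp (ln \<alpha> * fhgt Z A \<alpha> \<tau> z0 x)))"
  unfolding upper_gradient_def
proof (intro allI impI)
  fix \<gamma> :: "real \<Rightarrow> 'a \<times> nat \<Rightarrow> real" and a b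
  let ?d = "fdX Z A \<alpha> \<tau>" and ?h = "fhgt Z A \<alpha> \<tau> z0"
  let ?len = "curve_length ?d \<gamma> a b"
  assume \<gamma>: "a < b \<and> (\<forall>t\<in>{a..b}. \<gamma> t \<in> fX Z A \<alpha> \<tau>) \<and> curve_cont ?d \<gamma> a b
        \<and> ?len < \<infinity> \<and> (\<exists>s\<in>{a..b}. \<exists>t\<in>{a..b}. \<gamma> s \<noteq> \<gamma> t)"
  have weight: "ennreal (L * exp (ln \<alpha> * ?h x)) * ennreal (exp (- ln \<alpha> * ?h x)) = ennreal L" for x
    using \<open>0 \<le> L\<close> by (simp add: ennreal_mult''[symmetric] mult.assoc exp_add[symmetric])
  have "ennreal \<bar>u (\<gamma> a) - u (\<gamma> b)\<bar> \<le> ennreal (L * ?d (\<gamma> a) (\<gamma> b))"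
    using lip \<gamma> by (intro ennreal_leI) auto
  also have "\<dots> = ennreal L * ennreal (?d (\<gamma> a) (\<gamma> b))"
    using \<open>0 \<le> L\<close> by (simp add: ennreal_mult')
  also have "\<dots> \<le> ennreal L * ?len"
    using curve_length_ge_dist[of a b ?d \<gamma>] \<gamma> by (intro mult_left_mono) auto
  also have "\<dots> = ennreal L * emeasure lborel {0..enn2real ?len}"
    using \<gamma> by (simp add: less_top[symmetric])
  also have "\<dots> = (\<integral>\<^sup>+ \<sigma>. ennreal L * indicator {0..enn2real ?len} \<sigma> \<partial>lborel)"
    by (rule nn_integral_cmult_indicator[symmetric]) simp
  also have "\<dots> = line_int ?d \<gamma> a b (\<lambda>x. ennreal (L * exp (ln \<alpha> * ?h x)) * ennreal (exp (- ln \<alpha> * ?h x)))"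
    unfolding line_int_def weight ..
  finally show "ennreal \<bar>u (\<gamma> a) - u (\<gamma> b)\<bar>
      \<le> line_int ?d \<gamma> a b (\<lambda>x. ennreal (L * exp (ln \<alpha> * ?h x)) * ennreal (exp (- ln \<alpha> * ?h x)))" .
qed

(* For x = (1 - t) a + t b this is min (t + phi a) (1 - t + phi b). The height |x| is bary_min of the
  graph distance to the root, and bary_min (\<lambda>_. 0) is the distance to the nearest vertex. *)
definition bary_min :: "('v \<Rightarrow> real) \<Rightarrow> ('v \<Rightarrow> real) \<Rightarrow> real" where
  "bary_min \<phi> x = Min {(1 - x a) + \<phi> a | a. a \<in> supp x}"

lemma hgt_eq_bary_min: "hgt E v0 = bary_min (\<lambda>a. real (gdist E v0 a))"
  by (simp add: fun_eq_iff hgt_def bary_min_def)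

lemma supp_vtx [simp]: "supp (vtx v) = {v}"
  by (auto simp: supp_def vtx_def)

lemma vtx_self [simp]: "vtx v v = 1"
  by (simp add: vtx_def)

lemma supp_edge_pt: "a \<noteq> b \<Longrightarrow> 0 < t \<Longrightarrow> t < 1 \<Longrightarrow> supp (edge_pt a b t) = {a, b}"
  by (auto simp: supp_def edge_pt_def vtx_def)

lemma edge_pt_at_ends [simp]:
  assumes "a \<noteq> b"
  shows "edge_pt a b t a = 1 - t" "edge_pt a b t b = t"
  using assms by (auto simp: edge_pt_def vtx_def)

lemma bary_min_vtx [simp]: "bary_min \<phi> (vtx v) = \<phi> v"
proof -
  have "{(1 - vtx v a) + \<phi> a | a. a \<in> supp (vtx v)} = {\<phi> v}"
    unfolding supp_vtx by (auto simp: vtx_def)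
  thus ?thesis by (simp add: bary_min_def)
qed

lemma bary_min_edge_pt:
  assumes "a \<noteq> b" "0 < t" "t < 1"
  shows "bary_min \<phi> (edge_pt a b t) = min (t + \<phi> a) (1 - t + \<phi> b)"
proof -
  have "{(1 - edge_pt a b t c) + \<phi> c | c. c \<in> {a, b}}
      = {(1 - edge_pt a b t a) + \<phi> a, (1 - edge_pt a b t b) + \<phi> b}"
    by blast
  thus ?thesis using assms by (simp add: bary_min_def supp_edge_pt)
qed

locale simple_graph =
  fixes V :: "'v set" and E :: "'v \<Rightarrow> 'v \<Rightarrow> bool"
  assumes edge_vertices: "E a b \<Longrightarrow> a \<in> V \<and> b \<in> V"
    and edge_irrefl: "E a b \<Longrightarrow> a \<noteq> b"
    and edge_sym: "E a b \<Longrightarrow> E b a"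
begin

definition walk :: "nat \<Rightarrow> (nat \<Rightarrow> 'v) \<Rightarrow> 'v \<Rightarrow> 'v \<Rightarrow> bool" where
  "walk k f a b \<longleftrightarrow> f 0 = a \<and> f k = b \<and> (\<forall>i<k. E (f i) (f (Suc i)))"

lemma gdist_le_walk: "walk k f a b \<Longrightarrow> gdist E a b \<le> k"
  unfolding gdist_def walk_def by (rule Least_le) blast

lemma walk_gdist: "walk k f a b \<Longrightarrow> \<exists>g. walk (gdist E a b) g a b"
  unfolding gdist_def walk_def by (rule LeastI) blast

lemma walk_rev: "walk k f a b \<Longrightarrow> walk k (\<lambda>i. f (k - i)) b a"
  unfolding walk_def
proof (intro conjI allI impI)
  fix i assume w: "f 0 = a \<and> f k = b \<and> (\<forall>i<k. E (f i) (f (Suc i)))" and i: "i < k"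
  have "E (f (k - Suc i)) (f (Suc (k - Suc i)))" using w i by auto
  moreover have "Suc (k - Suc i) = k - i" using i by auto
  ultimately show "E (f (k - i)) (f (k - Suc i))" using edge_sym by auto
qed auto

lemma walk_append:
  assumes "walk k f a b" "walk l g b c"
  shows "walk (k + l) (\<lambda>i. if i \<le> k then f i else g (i - k)) a c"
  unfolding walk_def
proof (intro conjI allI impI)
  fix i assume i: "i < k + l"
  show "E (if i \<le> k then f i else g (i - k)) (if Suc i \<le> k then f (Suc i) else g (Suc i - k))"
  proof (cases "i < k")
    case True thus ?thesis using assms(1) by (auto simp: walk_def)
  next
    case False
    hence "Suc i - k = Suc (i - k)" "i - k < l" using i by auto
    thus ?thesis using assms False by (auto simp: walk_def)
  qed
qed (use assms in \<open>auto simp: walk_def\<close>)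

(* This holds even between vertices joined by no walk: both sides are then the same unspecified LEAST. *)
lemma gdist_sym: "gdist E a b = gdist E b a"
proof -
  have "(\<lambda>k. \<exists>f. walk k f a b) = (\<lambda>k. \<exists>f. walk k f b a)"
    using walk_rev by blast
  thus ?thesis unfolding gdist_def walk_def by simp
qed

lemma gdist_edge: "E a b \<Longrightarrow> gdist E a b \<le> 1"
  by (rule gdist_le_walk[of 1 "\<lambda>i. if i = 0 then a else b"]) (simp add: walk_def)

lemma gdist_triangle:
  assumes "walk k f a b" "walk l g b c"
  shows "gdist E a c \<le> gdist E a b + gdist E b c"
proof -
  obtain f' g' where "walk (gdist E a b) f' a b" "walk (gdist E b c) g' b c"
    using walk_gdist assms by blast
  thus ?thesis using gdist_le_walk walk_append by blast
qed

abbreviation X :: "('v \<Rightarrow> real) set" where "X \<equiv> realization V E"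

lemma realization_cases:
  assumes "x \<in> X"
  obtains (vertex) v where "v \<in> V" "x = vtx v"
    | (edge) a b t where "E a b" "0 < t" "t < 1" "x = edge_pt a b t"
  using assms unfolding realization_def by blast

lemma edge_pt_in_realization: "E a b \<Longrightarrow> 0 < t \<Longrightarrow> t < 1 \<Longrightarrow> edge_pt a b t \<in> X"
  unfolding realization_def by blast

lemma supp_realization:
  assumes "x \<in> X"
  shows "finite (supp x)" "supp x \<noteq> {}" "supp x \<subseteq> V" "\<And>w. w \<in> supp x \<Longrightarrow> 0 < x w \<and> x w \<le> 1"
proof -
  have "finite (supp x) \<and> supp x \<noteq> {} \<and> supp x \<subseteq> V \<and> (\<forall>w\<in>supp x. 0 < x w \<and> x w \<le> 1)"
    using assms
  proof (cases rule: realization_cases)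
    case (edge a b t)
    thus ?thesis using edge_irrefl[OF edge(1)] edge_vertices[OF edge(1)] by (auto simp: supp_edge_pt)
  qed simp
  thus "finite (supp x)" "supp x \<noteq> {}" "supp x \<subseteq> V" "\<And>w. w \<in> supp x \<Longrightarrow> 0 < x w \<and> x w \<le> 1"
    by auto
qed

lemma supp_realization_pair:
  assumes "x \<in> X" "a \<in> supp x" "b \<in> supp x" "a \<noteq> b"
  shows "x a + x b = 1 \<and> E a b"
  using assms(1)
proof (cases rule: realization_cases)
  case (edge c d t)
  have "{a, b} = {c, d}" using assms edge supp_edge_pt[OF edge_irrefl[OF edge(1)] edge(2,3)] by auto
  thus ?thesis
    using edge edge_sym[OF edge(1)] assms(4) edge_irrefl[OF edge(1)]
    by (auto simp: doubleton_eq_iff edge_pt_def vtx_def)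
qed (use assms in auto)

lemma supp_realization_single:
  assumes "x \<in> X" "supp x = {b}"
  shows "x b = 1"
  using assms(1)
proof (cases rule: realization_cases)
  case (edge c d t)
  thus ?thesis
    using assms(2) supp_edge_pt[OF edge_irrefl[OF edge(1)] edge(2,3)] edge_irrefl[OF edge(1)] by auto
qed (use assms in auto)

lemma gmetric_cases:
  assumes "x \<in> X" "y \<in> X"
  obtains (near) c d where "c = d \<or> E c d" "supp x \<union> supp y \<subseteq> {c, d}"
      "gmetric E x y = (\<Sum>w\<in>supp x \<union> supp y. \<bar>x w - y w\<bar>) / 2"
    | (far) a b where "a \<in> supp x" "b \<in> supp y"
      "gmetric E x y = (1 - x a) + real (gdist E a b) + (1 - y b)"
proof (cases "\<exists>c d. (c = d \<or> E c d) \<and> supp x \<union> supp y \<subseteq> {c, d}")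
  case True thus ?thesis using near unfolding gmetric_def by auto
next
  case False
  let ?S = "{(1 - x a) + real (gdist E a b) + (1 - y b) | a b. a \<in> supp x \<and> b \<in> supp y}"
  have "?S = (\<lambda>(a, b). (1 - x a) + real (gdist E a b) + (1 - y b)) ` (supp x \<times> supp y)" by auto
  hence "finite ?S" "?S \<noteq> {}" using supp_realization assms by auto
  hence "Min ?S \<in> ?S" by (rule Min_in)
  moreover have "gmetric E x y = Min ?S" using False unfolding gmetric_def by auto
  ultimately show ?thesis using far by auto
qed

lemma bary_min_le: "x \<in> X \<Longrightarrow> a \<in> supp x \<Longrightarrow> bary_min \<phi> x \<le> (1 - x a) + \<phi> a"
  unfolding bary_min_def by (rule Min_le) (auto simp: setcompr_eq_image supp_realization(1))

lemma bary_min_attained: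
  assumes "x \<in> X"
  obtains a where "a \<in> supp x" "bary_min \<phi> x = (1 - x a) + \<phi> a"
proof -
  have "bary_min \<phi> x \<in> {(1 - x a) + \<phi> a | a. a \<in> supp x}"
    unfolding bary_min_def using supp_realization(1,2)[OF assms]
    by (intro Min_in) (auto simp: setcompr_eq_image)
  thus ?thesis using that by auto
qed

lemma bary_min_ge:
  assumes "x \<in> X" "\<And>a. a \<in> supp x \<Longrightarrow> c \<le> \<phi> a"
  shows "c \<le> bary_min \<phi> x"
proof -
  obtain a where "a \<in> supp x" "bary_min \<phi> x = (1 - x a) + \<phi> a"
    using bary_min_attained[OF assms(1)] .
  thus ?thesis using assms supp_realization(4)[OF assms(1)] by force
qed

context
  fixes \<phi> :: "'v \<Rightarrow> real"
  assumes adjacent: "\<And>a b. E a b \<Longrightarrow> \<phi> b \<le> \<phi> a + 1"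
begin

lemma bary_min_ge_supp:
  assumes "x \<in> X" "a \<in> supp x"
  shows "\<phi> a - (1 - x a) \<le> bary_min \<phi> x"
proof -
  obtain a0 where a0: "a0 \<in> supp x" "bary_min \<phi> x = (1 - x a0) + \<phi> a0"
    using bary_min_attained[OF assms(1)] .
  show ?thesis
  proof (cases "a0 = a")
    case True thus ?thesis using a0 supp_realization(4)[OF assms] by auto
  next
    case False
    hence "x a + x a0 = 1 \<and> E a0 a" using supp_realization_pair assms a0(1) by metis
    thus ?thesis using adjacent[of a0 a] a0 by auto
  qed
qed

lemma bary_min_near:
  assumes "x \<in> X" "y \<in> X" "c = d \<or> E c d" "supp x \<union> supp y \<subseteq> {c, d}"
    and close: "\<And>w. w \<in> supp x \<Longrightarrow> x w - y w \<le> S"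
  shows "bary_min \<phi> y \<le> bary_min \<phi> x + S"
proof -
  obtain a where a: "a \<in> supp x" "bary_min \<phi> x = (1 - x a) + \<phi> a"
    using bary_min_attained[OF assms(1)] .
  show ?thesis
  proof (cases "a \<in> supp y")
    case True
    thus ?thesis using bary_min_le[OF assms(2) True, of \<phi>] a close[OF a(1)] by linarith
  next
    case False
    obtain b where b: "b \<in> supp y" using supp_realization(2)[OF assms(2)] by auto
    have "b \<noteq> a" using b False by auto
    have "a \<in> {c, d}" "b \<in> {c, d}" using assms(4) a(1) b by blast+
    hence cd: "{c, d} = {a, b}" using \<open>b \<noteq> a\<close> by auto
    hence "E a b" using assms(3) \<open>b \<noteq> a\<close> edge_sym by (metis doubleton_eq_iff)
    have "supp y = {b}" using assms(4) cd b False by blast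
    hence "y b = 1" by (rule supp_realization_single[OF assms(2)])
    moreover have "y a = 0" using False by (simp add: supp_def)
    ultimately show ?thesis
      using bary_min_le[OF assms(2) b, of \<phi>] adjacent[OF \<open>E a b\<close>] a close[OF a(1)] by linarith
  qed
qed

end

lemma bary_min_zero_bounds:
  assumes "x \<in> X"
  shows "0 \<le> bary_min (\<lambda>_. 0) x" "bary_min (\<lambda>_. 0) x \<le> 1"
proof -
  show "0 \<le> bary_min (\<lambda>_. 0) x" by (rule bary_min_ge[OF assms]) simp
  obtain a where a: "a \<in> supp x" using supp_realization(2)[OF assms] by auto
  have "0 < x a" using supp_realization(4)[OF assms a] by simp
  thus "bary_min (\<lambda>_. 0) x \<le> 1" using bary_min_le[OF assms a, of "\<lambda>_. 0"] by linarith
qed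

lemma bary_min_lipschitz:
  assumes \<phi>: "\<And>a b. a \<in> V \<Longrightarrow> b \<in> V \<Longrightarrow> \<phi> b \<le> \<phi> a + real (gdist E a b)"
    and "x \<in> X" "y \<in> X"
  shows "\<bar>bary_min \<phi> x - bary_min \<phi> y\<bar> \<le> 2 * gmetric E x y"
proof -
  have adjacent: "\<phi> b \<le> \<phi> a + 1" if "E a b" for a b
    using \<phi>[of a b] edge_vertices[OF that] gdist_edge[OF that] by linarith
  show ?thesis
    using assms(2,3)
  proof (cases rule: gmetric_cases)
    case (near c d)
    define S where "S = (\<Sum>w\<in>supp x \<union> supp y. \<bar>x w - y w\<bar>)"
    have abs_le: "\<bar>x w - y w\<bar> \<le> S" if "w \<in> supp x \<union> supp y" for w
      unfolding S_def by (rule member_le_sum) (use that supp_realization(1) assms in auto)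
    have xy: "x w - y w \<le> S" if "w \<in> supp x" for w using abs_le[of w] that by auto
    have yx: "y w - x w \<le> S" if "w \<in> supp y" for w using abs_le[of w] that by auto
    have sub: "supp y \<union> supp x \<subseteq> {c, d}" using near(2) by blast
    have "bary_min \<phi> y \<le> bary_min \<phi> x + S"
      using bary_min_near[where \<phi> = \<phi>, OF adjacent assms(2,3) near(1,2) xy] .
    moreover have "bary_min \<phi> x \<le> bary_min \<phi> y + S"
      using bary_min_near[where \<phi> = \<phi>, OF adjacent assms(3,2) near(1) sub yx] .
    moreover have "gmetric E x y = S / 2" using near(3) by (simp add: S_def)
    ultimately show ?thesis unfolding abs_le_iff by linarith
  next
    case (far a b)
    have "a \<in> V" "b \<in> V" using far supp_realization(3) assms by blast+
    hence "\<phi> b \<le> \<phi> a + real (gdist E a b)" "\<phi> a \<le> \<phi> b + real (gdist E a b)"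
      using \<phi>[of a b] \<phi>[of b a] gdist_sym[of b a] by auto
    moreover have "0 \<le> 1 - x a" "0 \<le> 1 - y b"
      using supp_realization(4) assms far(1,2) by auto
    ultimately show ?thesis
      using far(3) bary_min_le[OF assms(3) far(2), of \<phi>] bary_min_le[OF assms(2) far(1), of \<phi>]
        bary_min_ge_supp[where \<phi> = \<phi>, OF adjacent assms(2) far(1)]
        bary_min_ge_supp[where \<phi> = \<phi>, OF adjacent assms(3) far(2)]
      unfolding abs_le_iff by linarith
  qed
qed

end

definition edge_level :: "('v \<times> nat) \<times> ('v \<times> nat) \<Rightarrow> nat" where
  "edge_level e = min (snd (fst e)) (snd (snd e))"

lemma ray_pt_nat: "ray_pt xs (real k) = vtx (xs k, k)"
  by (simp add: ray_pt_def edge_pt_def)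

lemma ray_pt_half: "ray_pt xs (1/2 + real k) = edge_pt (xs k, k) (xs (Suc k), Suc k) (1/2)"
proof -
  have "nat \<lfloor>1/2 + real k\<rfloor> = k" by linarith
  thus ?thesis by (simp add: ray_pt_def)
qed

lemma bary_min_zero_ray_divergent: "\<not> ((\<lambda>r. bary_min (\<lambda>_. 0) (ray_pt xs r)) \<longlongrightarrow> L) at_top"
proof
  assume lim: "((\<lambda>r. bary_min (\<lambda>_. 0) (ray_pt xs r)) \<longlongrightarrow> L) at_top"
  have "(\<lambda>k. bary_min (\<lambda>_. 0) (ray_pt xs (real k))) \<longlonglongrightarrow> L"
    by (rule filterlim_compose[OF lim filterlim_real_sequentially])
  hence "L = 0" by (simp add: ray_pt_nat LIMSEQ_const_iff)
  have "filterlim (\<lambda>k::nat. 1/2 + real k) at_top sequentially"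
    by (rule filterlim_tendsto_add_at_top[OF tendsto_const filterlim_real_sequentially])
  hence "(\<lambda>k. bary_min (\<lambda>_. 0) (ray_pt xs (1/2 + real k))) \<longlonglongrightarrow> L"
    by (rule filterlim_compose[OF lim])
  hence "L = 1/2" by (simp add: ray_pt_half bary_min_edge_pt LIMSEQ_const_iff)
  with \<open>L = 0\<close> show False by simp
qed

lemma avg_n_vertex_zero: "(\<And>v. u (vtx v) = 0) \<Longrightarrow> avg_n A \<alpha> u \<xi> n = 0"
  by (simp add: avg_n_def)

locale hyperbolic_filling =
  fixes Z :: "'z::metric_space set" and \<nu> :: "'z measure" and \<alpha> \<tau> :: real
    and z0 :: 'z and A :: "nat \<Rightarrow> 'z set"
  assumes bounded_Z: "bounded Z" and diameter_lt_1: "diameter Z < 1"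
    and sets_\<nu>: "sets \<nu> = sets (restrict_space borel Z)" and doubling: "doubling_on Z \<nu>"
    and \<alpha>_gt_1: "1 < \<alpha>" and \<tau>_pos: "0 < \<tau>" and z0_in_Z: "z0 \<in> Z"
    and A_0: "A 0 = {z0}"
    and A_max_separated: "\<And>n. 1 \<le> n \<Longrightarrow> max_separated Z ((1 / \<alpha>) ^ n) (A n)"
    and A_mono: "\<And>n m. n < m \<Longrightarrow> A n \<subseteq> A m"
begin

abbreviation "E \<equiv> fE Z A \<alpha> \<tau>"
abbreviation "v0 \<equiv> (z0, 0::nat)"
abbreviation "height \<equiv> fhgt Z A \<alpha> \<tau> z0"

lemma level_step: "E v w \<Longrightarrow> snd w \<le> Suc (snd v)"
  unfolding fE_def Let_def by auto

sublocale simple_graph "fV A" E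
  by unfold_locales (auto simp: fE_def Let_def abs_minus_commute Int_commute)

lemma fX_eq_realization: "fX Z A \<alpha> \<tau> = X"
  by (simp add: fX_def)

lemma dist_lt_1:
  assumes "x \<in> Z" "y \<in> Z"
  shows "dist x y < 1"
  using diameter_bounded_bound[OF bounded_Z assms] diameter_lt_1 by linarith

lemma A_subset_Z: "A n \<subseteq> Z"
proof (cases "n = 0")
  case False thus ?thesis using A_max_separated[of n] unfolding max_separated_def by simp
qed (simp add: A_0 z0_in_Z)

lemma A_separated: "separated ((1 / \<alpha>) ^ n) (A n)"
proof (cases "n = 0")
  case False thus ?thesis using A_max_separated[of n] unfolding max_separated_def by simp
qed (simp add: A_0 separated_def)

lemma A_covers:
  assumes "\<xi> \<in> Z"
  shows "\<exists>z\<in>A n. dist z \<xi> < (1 / \<alpha>) ^ n"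
proof (cases "n = 0")
  case True thus ?thesis using A_0 dist_lt_1[OF z0_in_Z assms] by auto
next
  case False
  hence max: "max_separated Z ((1 / \<alpha>) ^ n) (A n)" using A_max_separated by simp
  show ?thesis
  proof (rule ccontr)
    assume far: "\<not> ?thesis"
    hence "separated ((1 / \<alpha>) ^ n) (insert \<xi> (A n))"
      using A_separated by (auto simp: separated_def dist_commute not_less)
    hence "\<xi> \<in> A n" using max assms unfolding max_separated_def by blast
    hence "\<not> dist \<xi> \<xi> < (1 / \<alpha>) ^ n" using far by blast
    thus False using \<alpha>_gt_1 by simp
  qed
qed

lemma edge_up:
  assumes "x \<in> A (Suc n)" "y \<in> A n" "dist y x < (1 / \<alpha>) ^ n"
  shows "E (y, n) (x, Suc n)"
proof -
  have "x \<in> Z" using A_subset_Z assms(1) by blast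
  hence "x \<in> ballZ Z y (\<tau> powr (1 - 1) * (1 / \<alpha>) ^ n) \<inter> ballZ Z x (\<tau> powr (1 - 1) * (1 / \<alpha>) ^ Suc n)"
    using assms \<tau>_pos \<alpha>_gt_1 by (simp add: ballZ_def)
  thus ?thesis using assms unfolding fE_def Let_def by (auto simp: fV_def)
qed

lemma walk_from_root: "x \<in> A n \<Longrightarrow> \<exists>f. walk n f v0 (x, n)"
proof (induction n arbitrary: x)
  case 0 thus ?case using A_0 by (auto simp: walk_def)
next
  case (Suc n)
  obtain y where y: "y \<in> A n" "dist y x < (1 / \<alpha>) ^ n"
    using A_covers A_subset_Z Suc.prems by blast
  obtain f where f: "walk n f v0 (y, n)" using Suc.IH[OF y(1)] by blast
  have "walk 1 (\<lambda>i. if i = 0 then (y, n) else (x, Suc n)) (y, n) (x, Suc n)"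
    using edge_up[OF Suc.prems y] by (simp add: walk_def)
  from walk_append[OF f this] have "\<exists>g. walk (n + 1) g v0 (x, Suc n)" by blast
  thus ?case by simp
qed

lemma walk_level_le: "walk k f a b \<Longrightarrow> snd b \<le> snd a + k"
proof (induction k arbitrary: b)
  case (Suc k)
  hence "walk k f a (f k)" "E (f k) b" by (auto simp: walk_def)
  hence "snd (f k) \<le> snd a + k" "snd b \<le> Suc (snd (f k))" using Suc.IH level_step by blast+
  thus ?case by simp
qed (simp add: walk_def)

lemma mem_fV: "v \<in> fV A \<longleftrightarrow> fst v \<in> A (snd v)"
  by (cases v) (simp add: fV_def)

lemma root_in_fV: "v0 \<in> fV A"
  by (simp add: fV_def A_0)

lemma walk_from_root_to: "v \<in> fV A \<Longrightarrow> \<exists>f. walk (snd v) f v0 v"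
  using walk_from_root[of "fst v" "snd v"] by (simp add: mem_fV)

lemma gdist_root:
  assumes "v \<in> fV A"
  shows "gdist E v0 v = snd v"
proof -
  obtain f where f: "walk (snd v) f v0 v" using walk_from_root_to[OF assms] ..
  obtain g where "walk (gdist E v0 v) g v0 v" using walk_gdist[OF f] ..
  hence "snd v \<le> snd v0 + gdist E v0 v" by (rule walk_level_le)
  thus ?thesis using gdist_le_walk[OF f] by simp
qed

lemma walk_between:
  assumes "v \<in> fV A" "w \<in> fV A"
  shows "\<exists>k f. walk k f v w"
proof -
  obtain f where f: "walk (snd v) f v0 v" using walk_from_root_to[OF assms(1)] ..
  obtain g where g: "walk (snd w) g v0 w" using walk_from_root_to[OF assms(2)] ..
  show ?thesis using walk_append[OF walk_rev[OF f] g] by (intro exI)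
qed

lemma height_eq_bary_min: "height = bary_min (\<lambda>a. real (gdist E v0 a))"
  by (simp add: fun_eq_iff fhgt_def hgt_eq_bary_min)

lemma height_lipschitz:
  assumes "x \<in> X" "y \<in> X"
  shows "\<bar>height x - height y\<bar> \<le> 2 * fdX Z A \<alpha> \<tau> x y"
  unfolding height_eq_bary_min fdX_def
proof (rule bary_min_lipschitz[OF _ assms])
  fix a b assume a: "a \<in> fV A" and b: "b \<in> fV A"
  obtain k f where "walk k f v0 a" using walk_between[OF root_in_fV a] by blast
  moreover obtain l g where "walk l g a b" using walk_between[OF a b] by blast
  ultimately have "gdist E v0 b \<le> gdist E v0 a + gdist E a b" by (rule gdist_triangle)
  thus "real (gdist E v0 b) \<le> real (gdist E v0 a) + real (gdist E a b)" by simp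
qed

lemma height_nonneg: "x \<in> X \<Longrightarrow> 0 \<le> height x"
  unfolding height_eq_bary_min by (rule bary_min_ge) simp_all

lemma edge_level_le_height:
  assumes "E a b" "0 < t" "t < 1"
  shows "real (edge_level (a, b)) \<le> height (edge_pt a b t)"
  unfolding height_eq_bary_min
proof (rule bary_min_ge[OF edge_pt_in_realization[OF assms]])
  fix w assume "w \<in> supp (edge_pt a b t)"
  hence "w = a \<or> w = b" using supp_edge_pt[OF edge_irrefl[OF assms(1)] assms(2,3)] by blast
  moreover have "gdist E v0 a = snd a" "gdist E v0 b = snd b"
    using gdist_root edge_vertices[OF assms(1)] by simp_all
  ultimately show "real (edge_level (a, b)) \<le> real (gdist E v0 w)"
    by (auto simp: edge_level_def)
qed

lemma A_mono_le: "j \<le> k \<Longrightarrow> A j \<subseteq> A k"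
  using A_mono by (cases "j = k") auto

lemma space_\<nu>: "space \<nu> = Z"
  using sets_eq_imp_space_eq[OF sets_\<nu>] by (simp add: space_restrict_space)

lemma ballZ_in_sets: "ballZ Z x r \<in> sets \<nu>"
  unfolding sets_\<nu> sets_restrict_space ballZ_def by (rule image_eqI[where x = "ball x r"]) auto

lemma ballZ_eq_Z:
  assumes "x \<in> Z" "1 \<le> r"
  shows "ballZ Z x r = Z"
proof
  show "ballZ Z x r \<subseteq> Z" by (simp add: ballZ_def)
  show "Z \<subseteq> ballZ Z x r"
  proof
    fix y assume y: "y \<in> Z"
    have "dist x y < r" using dist_lt_1[OF assms(1) y] assms(2) by linarith
    thus "y \<in> ballZ Z x r" using y by (simp add: ballZ_def)
  qed
qed

lemma emeasure_Z_pos: "0 < emeasure \<nu> Z" and emeasure_Z_finite: "emeasure \<nu> Z < \<infinity>"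
proof -
  obtain C where C: "\<forall>x\<in>Z. \<forall>r>0. 0 < emeasure \<nu> (ballZ Z x r) \<and> emeasure \<nu> (ballZ Z x r) < \<infinity>
      \<and> emeasure \<nu> (ballZ Z x (2 * r)) \<le> ennreal C * emeasure \<nu> (ballZ Z x r)"
    using doubling unfolding doubling_on_def by blast
  have "0 < emeasure \<nu> (ballZ Z z0 1) \<and> emeasure \<nu> (ballZ Z z0 1) < \<infinity>"
    using C[rule_format, OF z0_in_Z zero_less_one] by simp
  thus "0 < emeasure \<nu> Z" "emeasure \<nu> Z < \<infinity>" using ballZ_eq_Z[OF z0_in_Z order_refl] by simp_all
qed

lemma doubling_constant:
  obtains C where "0 \<le> C"
    "\<And>x r. x \<in> Z \<Longrightarrow> 0 < r \<Longrightarrow> emeasure \<nu> (ballZ Z x (2 * r)) \<le> ennreal C * emeasure \<nu> (ballZ Z x r)"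
proof -
  obtain C where C: "\<And>x r. x \<in> Z \<Longrightarrow> 0 < r \<Longrightarrow>
      emeasure \<nu> (ballZ Z x (2 * r)) \<le> ennreal C * emeasure \<nu> (ballZ Z x r)"
    using doubling unfolding doubling_on_def by blast
  have "emeasure \<nu> (ballZ Z x (2 * r)) \<le> ennreal (max C 0) * emeasure \<nu> (ballZ Z x r)"
    if "x \<in> Z" "0 < r" for x r
  proof -
    have "ennreal C \<le> ennreal (max C 0)" by (rule ennreal_leI) simp
    hence "ennreal C * emeasure \<nu> (ballZ Z x r) \<le> ennreal (max C 0) * emeasure \<nu> (ballZ Z x r)"
      by (rule mult_right_mono) simp
    with C[OF that] show ?thesis by (rule order_trans)
  qed
  thus ?thesis using that[of "max C 0"] by simp
qed

lemma emeasure_Z_le_ball: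
  assumes "0 \<le> C"
    and C: "\<And>x r. x \<in> Z \<Longrightarrow> 0 < r \<Longrightarrow>
      emeasure \<nu> (ballZ Z x (2 * r)) \<le> ennreal C * emeasure \<nu> (ballZ Z x r)"
    and K: "\<alpha> \<le> 2 ^ K" and x: "x \<in> A n"
  shows "emeasure \<nu> Z \<le> ennreal (C ^ (n * K + 1)) * emeasure \<nu> (ballZ Z x ((1 / \<alpha>) ^ n / 2))"
proof -
  have xZ: "x \<in> Z" using x A_subset_Z by blast
  have "(1::real) \<le> (2 ^ K / \<alpha>) ^ n" using K \<alpha>_gt_1 by (intro one_le_power) simp
  also have "(2 ^ K / \<alpha>) ^ n = 2 ^ (n * K + 1) * ((1 / \<alpha>) ^ n / 2)"
    by (simp add: power_mult power_divide mult.commute[of n K] power_one_over)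
  finally have ball: "ballZ Z x (2 ^ (n * K + 1) * ((1 / \<alpha>) ^ n / 2)) = Z"
    by (rule ballZ_eq_Z[OF xZ])
  have "emeasure \<nu> (ballZ Z x (2 ^ (n * K + 1) * ((1 / \<alpha>) ^ n / 2)))
      \<le> ennreal (C ^ (n * K + 1)) * emeasure \<nu> (ballZ Z x ((1 / \<alpha>) ^ n / 2))"
    by (rule doubling_iterate) (use C[OF xZ] \<open>0 \<le> C\<close> \<alpha>_gt_1 in auto)
  thus ?thesis unfolding ball .
qed

lemma card_A_le_geometric:
  obtains M Q where "\<And>n. finite (A n)" "\<And>n. real (card (A n)) \<le> M * Q ^ n"
proof -
  obtain C where C: "0 \<le> C" "\<And>x r. x \<in> Z \<Longrightarrow> 0 < r \<Longrightarrow>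
      emeasure \<nu> (ballZ Z x (2 * r)) \<le> ennreal C * emeasure \<nu> (ballZ Z x r)"
    using doubling_constant by metis
  obtain K :: nat where K: "\<alpha> \<le> 2 ^ K" using real_arch_pow[of 2 \<alpha>] by (auto intro: less_imp_le)
  have bound: "real (card F) \<le> C * (C ^ K) ^ n" if "F \<subseteq> A n" "finite F" for F n
  proof -
    have "real (card F) \<le> C ^ (n * K + 1)"
    proof (rule card_separated_le[OF \<open>finite F\<close> _ _ space_\<nu> ballZ_in_sets emeasure_Z_pos emeasure_Z_finite])
      show "separated ((1 / \<alpha>) ^ n) F" using A_separated[of n] that(1) by (auto simp: separated_def)
      show "emeasure \<nu> Z \<le> ennreal (C ^ (n * K + 1)) * emeasure \<nu> (ballZ Z x ((1 / \<alpha>) ^ n / 2))"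
        if "x \<in> F" for x using emeasure_Z_le_ball[OF C K] that \<open>F \<subseteq> A n\<close> by blast
    qed (simp add: C(1))
    also have "\<dots> = C * (C ^ K) ^ n" by (simp add: power_mult mult.commute[of n K])
    finally show ?thesis .
  qed
  have finite: "finite (A n)" for n by (rule finite_if_card_subsets_bounded[OF bound])
  show ?thesis by (rule that[OF finite bound[OF order_refl finite]])
qed

definition vertices_upto :: "nat \<Rightarrow> ('z \<times> nat) set" where
  "vertices_upto k = {(x, j). j \<le> k \<and> x \<in> A j}"

lemma mem_vertices_upto: "v \<in> vertices_upto k \<longleftrightarrow> snd v \<le> k \<and> fst v \<in> A (snd v)"
  by (cases v) (simp add: vertices_upto_def)

lemma edge_in_vertices_upto:
  assumes "E a b"
  shows "(a, b) \<in> vertices_upto (Suc (edge_level (a, b))) \<times> vertices_upto (Suc (edge_level (a, b)))"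
proof -
  have "fst a \<in> A (snd a)" "fst b \<in> A (snd b)"
    using edge_vertices[OF assms] by (simp_all add: mem_fV)
  moreover have "snd b \<le> Suc (snd a)" "snd a \<le> Suc (snd b)"
    using level_step[OF assms] level_step[OF edge_sym[OF assms]] by simp_all
  ultimately show ?thesis by (simp add: mem_vertices_upto edge_level_def min_def)
qed

lemma card_vertices_upto:
  assumes "\<And>n. finite (A n)" "\<And>n. real (card (A n)) \<le> M * Q ^ n"
  shows "finite (vertices_upto k)" "real (card (vertices_upto k)) \<le> M * (2 * Q) ^ k"
proof -
  have sub: "vertices_upto k \<subseteq> A k \<times> {..k}" using A_mono_le by (auto simp: vertices_upto_def)
  thus "finite (vertices_upto k)" by (rule finite_subset) (simp add: assms(1))
  have "card (vertices_upto k) \<le> card (A k) * (k + 1)"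
    using card_mono[OF _ sub] assms(1) by (simp add: card_cartesian_product)
  hence "real (card (vertices_upto k)) \<le> real (card (A k) * (k + 1))" by (simp only: of_nat_le_iff)
  also have "\<dots> = real (card (A k)) * (real k + 1)" by (simp add: algebra_simps)
  also have "\<dots> \<le> M * Q ^ k * 2 ^ k"
  proof (rule mult_mono[OF assms(2)])
    show "real k + 1 \<le> 2 ^ k" by (induction k) auto
    show "0 \<le> M * Q ^ k" using assms(2)[of k] of_nat_0_le_iff[of "card (A k)"] by linarith
  qed auto
  finally show "real (card (vertices_upto k)) \<le> M * (2 * Q) ^ k"
    by (simp add: power_mult_distrib mult_ac)
qed

lemma card_vertices_upto_square:
  assumes "\<And>n. finite (A n)" "\<And>n. real (card (A n)) \<le> M * Q ^ n"
  shows "real (card (vertices_upto (Suc m) \<times> vertices_upto (Suc m))) \<le> (2 * M * Q)\<^sup>2 * (4 * Q\<^sup>2) ^ m"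
proof -
  have "real (card (vertices_upto (Suc m) \<times> vertices_upto (Suc m))) = (real (card (vertices_upto (Suc m))))\<^sup>2"
    by (simp add: card_cartesian_product power2_eq_square)
  also have "\<dots> \<le> (M * (2 * Q) ^ Suc m)\<^sup>2"
    by (rule power_mono[OF card_vertices_upto(2)[OF assms]]) simp
  also have "\<dots> = (2 * M * Q)\<^sup>2 * (4 * Q\<^sup>2) ^ m"
  proof -
    have "(2::real) ^ m * 2 ^ m = 4 ^ m" by (simp add: power_mult_distrib[symmetric])
    thus ?thesis by (simp add: power_mult_distrib power2_eq_square power_mult[symmetric] mult_ac)
  qed
  finally show ?thesis .
qed

lemma edge_gaussian_sum_finite:
  "(\<integral>\<^sup>+ e. ennreal (exp (- (real (edge_level e))\<^sup>2)) \<partial>count_space {(a, b). E a b}) < \<infinity>"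
proof -
  obtain M Q where MQ: "\<And>n. finite (A n)" "\<And>n. real (card (A n)) \<le> M * Q ^ n"
    using card_A_le_geometric by metis
  define P where "P m = vertices_upto (Suc m) \<times> vertices_upto (Suc m)" for m
  let ?w = "\<lambda>m::nat. ennreal (exp (- (real m)\<^sup>2))"
  have P_finite: "finite (P m)" for m using card_vertices_upto(1)[OF MQ] by (simp add: P_def)
  have P_card: "real (card (P m)) \<le> (2 * M * Q)\<^sup>2 * (4 * Q\<^sup>2) ^ m" for m
    unfolding P_def by (rule card_vertices_upto_square[OF MQ])
  have cover: "?w (edge_level e) * indicator {(a, b). E a b} e \<le> (\<Sum>m. ?w m * indicator (P m) e)" for e
  proof (cases "e \<in> {(a, b). E a b}")
    case True
    hence "e \<in> P (edge_level e)" using edge_in_vertices_upto by (auto simp: P_def)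
    hence "?w (edge_level e) * indicator {(a, b). E a b} e = (\<Sum>m\<in>{edge_level e}. ?w m * indicator (P m) e)"
      using True by simp
    also have "\<dots> \<le> (\<Sum>m. ?w m * indicator (P m) e)" by (rule sum_le_suminf) auto
    finally show ?thesis .
  qed simp
  have "(\<integral>\<^sup>+ e. ?w (edge_level e) \<partial>count_space {(a, b). E a b})
      = (\<integral>\<^sup>+ e. ?w (edge_level e) * indicator {(a, b). E a b} e \<partial>count_space UNIV)"
    by (rule nn_integral_count_space_indicator) simp
  also have "\<dots> \<le> (\<integral>\<^sup>+ e. (\<Sum>m. ?w m * indicator (P m) e) \<partial>count_space UNIV)"
    by (rule nn_integral_mono) (rule cover)
  also have "\<dots> = (\<Sum>m. ?w m * of_nat (card (P m)))"
    by (simp add: nn_integral_suminf nn_integral_cmult_indicator P_finite)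
  also have "\<dots> \<le> (\<Sum>m. ennreal ((2 * M * Q)\<^sup>2 * (exp (- (real m)\<^sup>2) * (4 * Q\<^sup>2) ^ m)))"
  proof (intro suminf_le allI)
    fix m
    have "?w m * of_nat (card (P m)) = ennreal (exp (- (real m)\<^sup>2) * real (card (P m)))"
      by (simp add: ennreal_mult ennreal_of_nat_eq_real_of_nat)
    also have "\<dots> \<le> ennreal ((2 * M * Q)\<^sup>2 * (exp (- (real m)\<^sup>2) * (4 * Q\<^sup>2) ^ m))"
      using mult_left_mono[OF P_card, of "exp (- (real m)\<^sup>2)" m] by (intro ennreal_leI) (simp add: mult_ac)
    finally show "?w m * of_nat (card (P m)) \<le> ennreal ((2 * M * Q)\<^sup>2 * (exp (- (real m)\<^sup>2) * (4 * Q\<^sup>2) ^ m))" .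
  qed auto
  also have "\<dots> < \<infinity>" by (rule suminf_exp_neg_square_mult_power_finite) simp_all
  finally show ?thesis .
qed

lemma not_trace_T_exists_if_rays_diverge:
  assumes "\<And>\<xi> xs L. \<xi> \<in> Z \<Longrightarrow> \<forall>n. xs n \<in> A_xi A \<alpha> \<xi> n \<Longrightarrow> \<not> ((\<lambda>r. u (ray_pt xs r)) \<longlongrightarrow> L) at_top"
  shows "\<not> trace_T_exists \<nu> A \<alpha> u"
proof
  assume "trace_T_exists \<nu> A \<alpha> u"
  hence "AE \<xi> in \<nu>. False"
    unfolding trace_T_exists_def using AE_space
  proof eventually_elim
    case (elim \<xi>)
    then obtain L where L: "\<forall>xs. (\<forall>n. xs n \<in> A_xi A \<alpha> \<xi> n) \<longrightarrow> ((\<lambda>r. u (ray_pt xs r)) \<longlongrightarrow> L) at_top"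
      by blast
    have "\<xi> \<in> Z" using elim space_\<nu> by auto
    hence "\<forall>n. \<exists>z. z \<in> A_xi A \<alpha> \<xi> n" using A_covers by (auto simp: A_xi_def)
    then obtain xs where xs: "\<forall>n. xs n \<in> A_xi A \<alpha> \<xi> n" by metis
    hence "((\<lambda>r. u (ray_pt xs r)) \<longlongrightarrow> L) at_top" using L by blast
    with assms[OF \<open>\<xi> \<in> Z\<close> xs] show False ..
  qed
  hence "emeasure \<nu> (space \<nu>) = 0" by (simp add: eventually_False ae_filter_eq_bot_iff)
  with emeasure_Z_pos space_\<nu> show False by simp
qed

lemma mu_int_finite_if_gaussian:
  fixes f :: "(('z \<times> nat) \<Rightarrow> real) \<Rightarrow> ennreal" and \<rho> :: "real \<Rightarrow> real"
  assumes "0 \<le> c"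
    and bound: "\<And>x. x \<in> X \<Longrightarrow> f x * ennreal (\<rho> (height x)) \<le> ennreal (c * exp (- (height x)\<^sup>2))"
  shows "mu_int Z A \<alpha> \<tau> z0 \<nu> \<rho> f < \<infinity>"
proof -
  let ?Ev = "{(a, b). E a b}"
  let ?K = "2 * emeasure \<nu> Z * ennreal c"
  let ?w = "\<lambda>e. ennreal (exp (- (real (edge_level e))\<^sup>2))"
  let ?g = "\<lambda>e t. f (edge_pt (fst e) (snd e) t) * ennreal (\<rho> (height (edge_pt (fst e) (snd e) t)))
      * (emeasure \<nu> (Bv Z \<alpha> (fst e)) + emeasure \<nu> (Bv Z \<alpha> (snd e))) * indicator {0<..<1} t"
  have pointwise: "?g e t \<le> (?K * ?w e) * indicator {0<..<1} t" if e: "e \<in> ?Ev" for e t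
  proof (cases "t \<in> {0<..<1}")
    case True
    obtain a b where ab: "e = (a, b)" "E a b" using e by auto
    let ?x = "edge_pt a b t"
    have x: "?x \<in> X" using edge_pt_in_realization ab True by auto
    have "(real (edge_level e))\<^sup>2 \<le> (height ?x)\<^sup>2"
      using edge_level_le_height[OF ab(2)] True ab(1) by (intro power_mono) auto
    hence "c * exp (- (height ?x)\<^sup>2) \<le> c * exp (- (real (edge_level e))\<^sup>2)"
      using \<open>0 \<le> c\<close> by (intro mult_left_mono) auto
    hence "f ?x * ennreal (\<rho> (height ?x)) \<le> ennreal (c * exp (- (real (edge_level e))\<^sup>2))"
      by (rule order_trans[OF bound[OF x] ennreal_leI])
    moreover have "emeasure \<nu> (Bv Z \<alpha> a) + emeasure \<nu> (Bv Z \<alpha> b) \<le> 2 * emeasure \<nu> Z"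
      using emeasure_space[of \<nu>] space_\<nu> by (simp add: mult_2 add_mono)
    ultimately have "f ?x * ennreal (\<rho> (height ?x)) * (emeasure \<nu> (Bv Z \<alpha> a) + emeasure \<nu> (Bv Z \<alpha> b))
        \<le> ennreal (c * exp (- (real (edge_level e))\<^sup>2)) * (2 * emeasure \<nu> Z)"
      by (rule mult_mono) auto
    hence "?g e t \<le> ennreal (c * exp (- (real (edge_level e))\<^sup>2)) * (2 * emeasure \<nu> Z)"
      using True ab(1) by simp
    also have "\<dots> = (?K * ?w e) * indicator {0<..<1} t"
      using True \<open>0 \<le> c\<close> by (simp add: ennreal_mult mult_ac)
    finally show ?thesis .
  qed simp
  have "(\<integral>\<^sup>+ e. (\<integral>\<^sup>+ t. ?g e t \<partial>lborel) \<partial>count_space ?Ev)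
      \<le> (\<integral>\<^sup>+ e. (\<integral>\<^sup>+ t. (?K * ?w e) * indicator {0<..<1::real} t \<partial>lborel) \<partial>count_space ?Ev)"
    by (intro nn_integral_mono) (use pointwise in simp)
  also have "\<dots> = ?K * (\<integral>\<^sup>+ e. ?w e \<partial>count_space ?Ev)"
    by (simp add: nn_integral_cmult_indicator nn_integral_cmult)
  also have "\<dots> < \<infinity>"
    using edge_gaussian_sum_finite emeasure_Z_finite by (simp add: ennreal_mult_less_top)
  finally have "(\<integral>\<^sup>+ e. (\<integral>\<^sup>+ t. ?g e t \<partial>lborel) \<partial>count_space ?Ev) \<noteq> \<infinity>"
    by simp
  thus ?thesis unfolding mu_int_def by (simp add: ennreal_divide_eq_top_iff less_top[symmetric])
qed

lemma N1p_bary_min_zero: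
  assumes "0 \<le> p"
  shows "N1p Z A \<alpha> \<tau> z0 \<nu> (\<lambda>t. exp (- t\<^sup>2 - ln \<alpha> * p * t)) p (bary_min (\<lambda>_. 0))"
proof -
  let ?u = "bary_min (\<lambda>_::'z \<times> nat. 0)"
  let ?g = "\<lambda>x. ennreal (2 * exp (ln \<alpha> * height x))"
  let ?\<rho> = "\<lambda>t::real. exp (- t\<^sup>2 - ln \<alpha> * p * t)"
  have u_lipschitz: "\<bar>?u x - ?u y\<bar> \<le> 2 * fdX Z A \<alpha> \<tau> x y" if "x \<in> X" "y \<in> X" for x y
    unfolding fdX_def by (rule bary_min_lipschitz[OF _ that]) simp
  have \<rho>_le: "?\<rho> (height x) \<le> exp (- (height x)\<^sup>2)" if x: "x \<in> X" for x
  proof -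
    have "0 \<le> ln \<alpha> * p * height x" using height_nonneg[OF x] \<alpha>_gt_1 assms by simp
    thus ?thesis by simp
  qed
  have "mu_int Z A \<alpha> \<tau> z0 \<nu> ?\<rho> (\<lambda>x. ennreal (\<bar>?u x\<bar> powr p)) < \<infinity>"
  proof (rule mu_int_finite_if_gaussian[where c = 1])
    fix x assume x: "x \<in> X"
    have "\<bar>?u x\<bar> powr p * ?\<rho> (height x) \<le> 1 * exp (- (height x)\<^sup>2)"
      using bary_min_zero_bounds[OF x] assms \<rho>_le[OF x] by (intro mult_mono powr_le1) auto
    thus "ennreal (\<bar>?u x\<bar> powr p) * ennreal (?\<rho> (height x)) \<le> ennreal (1 * exp (- (height x)\<^sup>2))"
      by (simp add: ennreal_mult[symmetric] ennreal_leI)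
  qed simp
  moreover have "mu_int Z A \<alpha> \<tau> z0 \<nu> ?\<rho> (\<lambda>x. ennpow (?g x) p) < \<infinity>"
  proof (rule mu_int_finite_if_gaussian[where c = "2 powr p"])
    fix x
    have "?\<rho> (height x) * exp (ln \<alpha> * height x) powr p = exp (- (height x)\<^sup>2)"
      by (simp add: exp_powr_real exp_add[symmetric] algebra_simps)
    hence "(2 * exp (ln \<alpha> * height x)) powr p * ?\<rho> (height x) = 2 powr p * exp (- (height x)\<^sup>2)"
      by (simp add: powr_mult mult_ac)
    thus "ennpow (?g x) p * ennreal (?\<rho> (height x)) \<le> ennreal (2 powr p * exp (- (height x)\<^sup>2))"
      by (simp add: ennpow_def ennreal_mult[symmetric])
  qed simp
  moreover have "?u \<in> borel_measurable (mborel (fX Z A \<alpha> \<tau>) (fdX Z A \<alpha> \<tau>))"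
    by (rule lipschitz_measurable_mborel[where L = 2]) (use u_lipschitz in \<open>auto simp: fX_eq_realization\<close>)
  moreover have "?g \<in> borel_measurable (mborel (fX Z A \<alpha> \<tau>) (fdX Z A \<alpha> \<tau>))"
  proof -
    have [measurable]: "height \<in> borel_measurable (mborel (fX Z A \<alpha> \<tau>) (fdX Z A \<alpha> \<tau>))"
      by (rule lipschitz_measurable_mborel[where L = 2]) (use height_lipschitz in \<open>auto simp: fX_eq_realization\<close>)
    show ?thesis by measurable
  qed
  moreover have "upper_gradient Z A \<alpha> \<tau> z0 ?u ?g"
    by (rule lipschitz_upper_gradient) (use u_lipschitz in \<open>auto simp: fX_eq_realization\<close>)
  ultimately show ?thesis unfolding N1p_def by blast
qed

end

theorem mainTheorem3:
  fixes Z :: "'z::metric_space set" and \<nu> :: "'z measure"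
    and \<alpha> \<tau> p :: real and z0 :: 'z and A :: "nat \<Rightarrow> 'z set"
  assumes "compact Z" and "0 < diameter Z" and "diameter Z < 1"
    and "sets \<nu> = sets (restrict_space borel Z)" and "doubling_on Z \<nu>"
    and "\<alpha> > 1" and "\<tau> > 1" and "z0 \<in> Z"
    and "A 0 = {z0}"
    and "\<And>n. n \<ge> 1 \<Longrightarrow> max_separated Z ((1 / \<alpha>) ^ n) (A n)"
    and "\<And>n m. n < m \<Longrightarrow> A n \<subseteq> A m"
    and "1 \<le> p"
  shows "\<exists>u. N1p Z A \<alpha> \<tau> z0 \<nu> (\<lambda>t. exp (- t\<^sup>2 - ln \<alpha> * p * t)) p u
           \<and> trace_tilde_exists \<nu> A \<alpha> u
           \<and> (AE \<xi> in \<nu>. (\<lambda>n. avg_n A \<alpha> u \<xi> n) \<longlonglongrightarrow> 0)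
           \<and> \<not> trace_T_exists \<nu> A \<alpha> u"
proof -
  interpret hyperbolic_filling Z \<nu> \<alpha> \<tau> z0 A
    using assms compact_imp_bounded by unfold_locales auto
  let ?u = "bary_min (\<lambda>_::'z \<times> nat. 0)"
  have "N1p Z A \<alpha> \<tau> z0 \<nu> (\<lambda>t. exp (- t\<^sup>2 - ln \<alpha> * p * t)) p ?u"
    by (rule N1p_bary_min_zero) (use \<open>1 \<le> p\<close> in simp)
  moreover have "avg_n A \<alpha> ?u \<xi> = (\<lambda>n. 0)" for \<xi>
    by (rule ext, rule avg_n_vertex_zero) simp
  moreover have "\<not> trace_T_exists \<nu> A \<alpha> ?u"
    by (rule not_trace_T_exists_if_rays_diverge) (rule bary_min_zero_ray_divergent)
  ultimately show ?thesis
    unfolding trace_tilde_exists_def by (intro exI[of _ ?u]) (simp add: convergent_const)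
qed

end
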